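(* For every positive integer $s$, $K_{3}^{RT}(3,s,3s-2)\le 5$.
   Context: For positive integers $m,s$, the RT poset $[m\times s]$ is the set $\{1,\ldots,ms\}$ partitioned into $m$ blocks $B_i=\{is+1,\ldots,(i+1)s\}$; each block is a chain under the usual order of the integers, and elements of different blocks are incomparable. An ideal is a down-closed subset; $\langle A\rangle$ denotes the smallest ideal containing $A$. For $x,y\in\mathbb{Z}_q^{ms}$, $d_{RT}(x,y)=|\langle\{i:x_i\neq y_i\}\rangle|$. A code $C\subseteq \mathbb{Z}_q^{ms}$ is an $R$-covering if every $x\in\mathbb{Z}_q^{ms}$ has some $c\in C$ with $d_{RT}(x,c)\le R$; $K_q^{RT}(m,s,R)$ is the smallest size of an $R$-covering. *)

theory Defs
  imports Main
begin

text \<open>RT poset [m x s], 0-indexed: positions 0..<m*s, block of position i is i div s,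
  each block is a chain ordered as the integers; different blocks incomparable.\<close>

definition rt_le :: "nat \<Rightarrow> nat \<Rightarrow> nat \<Rightarrow> bool" where
  "rt_le s i j \<longleftrightarrow> i div s = j div s \<and> i \<le> j"

definition rt_ideal :: "nat \<Rightarrow> nat \<Rightarrow> nat set \<Rightarrow> nat set" where
  "rt_ideal m s A = {j. j < m * s \<and> (\<exists>i\<in>A. rt_le s j i)}"

definition rt_space :: "nat \<Rightarrow> nat \<Rightarrow> nat \<Rightarrow> (nat \<Rightarrow> nat) set" where
  "rt_space q m s = {x. (\<forall>i < m * s. x i < q) \<and> (\<forall>i \<ge> m * s. x i = 0)}"

definition d_RT :: "nat \<Rightarrow> nat \<Rightarrow> (nat \<Rightarrow> nat) \<Rightarrow> (nat \<Rightarrow> nat) \<Rightarrow> nat" where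
  "d_RT m s x y = card (rt_ideal m s {i. i < m * s \<and> x i \<noteq> y i})"

definition is_covering :: "nat \<Rightarrow> nat \<Rightarrow> nat \<Rightarrow> nat \<Rightarrow> (nat \<Rightarrow> nat) set \<Rightarrow> bool" where
  "is_covering q m s R C \<longleftrightarrow> C \<subseteq> rt_space q m s \<and>
     (\<forall>x\<in>rt_space q m s. \<exists>c\<in>C. d_RT m s x c \<le> R)"

definition K_RT :: "nat \<Rightarrow> nat \<Rightarrow> nat \<Rightarrow> nat \<Rightarrow> nat" where
  "K_RT q m s R = (LEAST k. \<exists>C. is_covering q m s R C \<and> finite C \<and> card C = k)"

end

theory Submission
  imports Defs
begin

text \<open>The top element of a block lies in the ideal generated by the disagreement set of
  two words only if the words differ at that element. Hence if \<open>x\<close> and \<open>y\<close> agree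
  on the tops of all but \<open>r\<close> of the \<open>m\<close> blocks, then \<open>d_RT x y \<le> m s - m + r\<close>. Placing the
  letters of a Hamming covering code of length \<open>m\<close> and radius \<open>r\<close> on the block tops (and
  zeros elsewhere) therefore gives an RT covering of radius \<open>m s - m + r\<close> of the same size.
  Since \<open>{000, 011, 101, 110, 222}\<close> is a ternary Hamming covering code of length 3 and
  radius 1, this yields the bound 5 for radius \<open>3 s - 2\<close>.\<close>

definition rt_top :: "nat \<Rightarrow> nat \<Rightarrow> nat" where
  "rt_top s k = k * s + (s - 1)"

definition rt_lift :: "nat \<Rightarrow> (nat \<Rightarrow> nat) \<Rightarrow> nat \<Rightarrow> nat" where
  "rt_lift s v i = (if i = rt_top s (i div s) then v (i div s) else 0)"

lemma rt_top_div:
  assumes "0 < s"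
  shows "rt_top s k div s = k"
  using assms by (simp only: rt_top_def add.commute[of "k * s"] div_mult_self1) simp

lemma rt_top_less:
  assumes "0 < s" and "k < m"
  shows "rt_top s k < m * s"
proof -
  have "Suc k * s \<le> m * s"
    using assms(2) by (intro mult_le_mono1) simp
  then show ?thesis
    using assms(1) by (simp add: rt_top_def)
qed

lemma inj_rt_top:
  assumes "0 < s"
  shows "inj (rt_top s)"
  by (metis assms injI rt_top_div)

lemma rt_top_in_rt_ideal_iff:
  assumes "0 < s" and "k < m"
  shows "rt_top s k \<in> rt_ideal m s A \<longleftrightarrow> rt_top s k \<in> A"
proof
  assume "rt_top s k \<in> rt_ideal m s A"
  then obtain i where "i \<in> A" "i div s = k" "rt_top s k \<le> i"
    using rt_top_div[OF assms(1)] by (auto simp: rt_ideal_def rt_le_def)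
  moreover have "i < Suc k * s"
    using \<open>i div s = k\<close> assms(1) by (metis div_less_iff_less_mult lessI)
  ultimately have "i = rt_top s k"
    by (simp add: rt_top_def)
  with \<open>i \<in> A\<close> show "rt_top s k \<in> A"
    by simp
next
  assume "rt_top s k \<in> A"
  then show "rt_top s k \<in> rt_ideal m s A"
    using rt_top_less[OF assms] by (auto simp: rt_ideal_def rt_le_def)
qed

lemma d_RT_le_agreeing_tops:
  assumes "0 < s"
  shows "d_RT m s x y \<le> m * s - card {k. k < m \<and> x (rt_top s k) = y (rt_top s k)}"
    (is "_ \<le> _ - card ?K")
proof -
  let ?I = "rt_ideal m s {i. i < m * s \<and> x i \<noteq> y i}"
  have "?I \<subseteq> {..<m * s} - rt_top s ` ?K"
  proof
    fix i assume "i \<in> ?I"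
    then have "i < m * s"
      by (simp add: rt_ideal_def)
    moreover have "i \<notin> rt_top s ` ?K"
      using \<open>i \<in> ?I\<close> rt_top_in_rt_ideal_iff[OF assms] by auto
    ultimately show "i \<in> {..<m * s} - rt_top s ` ?K"
      by simp
  qed
  then have "card ?I \<le> card ({..<m * s} - rt_top s ` ?K)"
    by (intro card_mono) auto
  also have "\<dots> = m * s - card (rt_top s ` ?K)"
    using rt_top_less[OF assms] by (subst card_Diff_subset) auto
  also have "card (rt_top s ` ?K) = card ?K"
    using inj_rt_top[OF assms] by (simp add: card_image inj_on_subset)
  finally show ?thesis
    by (simp add: d_RT_def)
qed

lemma rt_lift_rt_top:
  assumes "0 < s"
  shows "rt_lift s v (rt_top s k) = v k"
  by (simp add: rt_lift_def rt_top_div[OF assms])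

lemma rt_lift_in_rt_space:
  assumes "0 < s" and "v \<in> rt_space q m 1"
  shows "rt_lift s v \<in> rt_space q m s"
proof -
  have "rt_lift s v i < q" if "i < m * s" for i
  proof -
    have "i div s < m"
      using that by (simp add: less_mult_imp_div_less)
    then have "v (i div s) < q"
      using assms(2) by (simp add: rt_space_def)
    then show ?thesis
      by (simp add: rt_lift_def)
  qed
  moreover have "rt_lift s v i = 0" if "m * s \<le> i" for i
  proof -
    have "m \<le> i div s"
      using that assms(1) by (simp add: less_eq_div_iff_mult_less_eq)
    then show ?thesis
      using assms(2) by (simp add: rt_space_def rt_lift_def)
  qed
  ultimately show ?thesis
    by (simp add: rt_space_def not_less)
qed

text \<open>For chains of length 1 the RT metric is the Hamming metric, so the coverings for
  \<open>s = 1\<close> are exactly the Hamming covering codes.\<close>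

lemma d_RT_1: "d_RT m 1 x y = card {i. i < m \<and> x i \<noteq> y i}"
  by (simp add: d_RT_def rt_ideal_def rt_le_def)

lemma is_covering_rt_lift:
  assumes "0 < s" and cover: "is_covering q m 1 r V"
  shows "is_covering q m s (m * s - m + r) (rt_lift s ` V)"
  unfolding is_covering_def
proof (intro conjI ballI)
  show "rt_lift s ` V \<subseteq> rt_space q m s"
    using cover rt_lift_in_rt_space[OF assms(1)] by (auto simp: is_covering_def)
next
  fix x assume x: "x \<in> rt_space q m s"
  define w where "w k = (if k < m then x (rt_top s k) else 0)" for k
  have "w \<in> rt_space q m 1"
    using x rt_top_less[OF assms(1)] by (simp add: rt_space_def w_def)
  then obtain v where "v \<in> V" and "d_RT m 1 w v \<le> r"
    using cover by (auto simp: is_covering_def)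
  let ?N = "{k. k < m \<and> x (rt_top s k) \<noteq> v k}"
  let ?K = "{k. k < m \<and> x (rt_top s k) = v k}"
  have "d_RT m 1 w v = card ?N"
    unfolding d_RT_1 w_def by (intro arg_cong[where f = card]) auto
  with \<open>d_RT m 1 w v \<le> r\<close> have "card ?N \<le> r"
    by simp
  have "?K = {..<m} - ?N"
    by auto
  then have "card ?K = m - card ?N"
    by (simp add: card_Diff_subset subset_eq)
  moreover have "m \<le> m * s"
    using assms(1) by simp
  moreover have "d_RT m s x (rt_lift s v) \<le> m * s - card ?K"
    using d_RT_le_agreeing_tops[OF assms(1), of m x "rt_lift s v"]
    by (simp add: rt_lift_rt_top[OF assms(1)])
  ultimately have "d_RT m s x (rt_lift s v) \<le> m * s - m + r"
    using \<open>card ?N \<le> r\<close> by linarith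
  with \<open>v \<in> V\<close> show "\<exists>c\<in>rt_lift s ` V. d_RT m s x c \<le> m * s - m + r"
    by blast
qed

lemma K_RT_le_card:
  assumes "is_covering q m s R C" and "finite C"
  shows "K_RT q m s R \<le> card C"
  unfolding K_RT_def using assms by (intro Least_le) blast

lemma K_RT_le_hamming_covering:
  assumes "0 < s" and "is_covering q m 1 r V" and "finite V"
  shows "K_RT q m s (m * s - m + r) \<le> card V"
proof -
  have "K_RT q m s (m * s - m + r) \<le> card (rt_lift s ` V)"
    using assms by (intro K_RT_le_card is_covering_rt_lift) auto
  also have "\<dots> \<le> card V"
    by (rule card_image_le[OF assms(3)])
  finally show ?thesis .
qed

definition ternary_word :: "nat \<Rightarrow> nat \<Rightarrow> nat \<Rightarrow> nat \<Rightarrow> nat" where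
  "ternary_word a b c i = (if i = 0 then a else if i = 1 then b else if i = 2 then c else 0)"

definition ternary_code :: "(nat \<Rightarrow> nat) set" where
  "ternary_code = (\<lambda>(a, b, c). ternary_word a b c) `
     {(0, 0, 0), (0, 1, 1), (1, 0, 1), (1, 1, 0), (2, 2, 2)}"

lemma card_ternary_code: "card ternary_code \<le> 5"
  unfolding ternary_code_def by (rule order.trans[OF card_image_le]) auto

lemma ternary_code_covers:
  assumes "a < 3" "b < 3" "c < 3"
  shows "\<exists>v\<in>ternary_code. \<exists>j. \<forall>i<3. i \<noteq> j \<longrightarrow> ternary_word a b c i = v i"
proof -
  have "a \<in> {0, 1, 2}" "b \<in> {0, 1, 2}" "c \<in> {0, 1, 2}"
    using assms by auto
  then show ?thesis
    unfolding ternary_code_def by (auto simp: ternary_word_def numeral_3_eq_3 less_Suc_eq)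
qed

lemma is_covering_ternary_code: "is_covering 3 3 1 1 ternary_code"
  unfolding is_covering_def
proof (intro conjI ballI)
  show "ternary_code \<subseteq> rt_space 3 3 1"
    by (auto simp: ternary_code_def rt_space_def ternary_word_def)
next
  fix x assume "x \<in> rt_space 3 3 1"
  then have "x 0 < 3" "x 1 < 3" "x 2 < 3"
    by (simp_all add: rt_space_def)
  then obtain v j where "v \<in> ternary_code"
    and agree: "\<forall>i<3. i \<noteq> j \<longrightarrow> ternary_word (x 0) (x 1) (x 2) i = v i"
    using ternary_code_covers by blast
  have word: "x i = ternary_word (x 0) (x 1) (x 2) i" if "i < 3" for i
    using that by (auto simp: ternary_word_def numeral_3_eq_3 less_Suc_eq)
  have "{i. i < 3 \<and> x i \<noteq> v i} \<subseteq> {j}"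
  proof
    fix i assume "i \<in> {i. i < 3 \<and> x i \<noteq> v i}"
    then show "i \<in> {j}"
      using agree word[of i] by auto
  qed
  then have "d_RT 3 1 x v \<le> 1"
    unfolding d_RT_1 using card_mono[of "{j}"] by simp
  with \<open>v \<in> ternary_code\<close> show "\<exists>c\<in>ternary_code. d_RT 3 1 x c \<le> 1"
    by blast
qed

theorem corollary4:
  fixes s :: nat
  assumes "0 < s"
  shows "K_RT 3 3 s (3 * s - 2) \<le> 5"
proof -
  have "3 * s - 2 = 3 * s - 3 + 1"
    using assms by simp
  moreover have "finite ternary_code"
    by (simp add: ternary_code_def)
  ultimately have "K_RT 3 3 s (3 * s - 2) \<le> card ternary_code"
    using K_RT_le_hamming_covering[OF assms is_covering_ternary_code] by simp
  then show ?thesis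
    using card_ternary_code by linarith
qed

end
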